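(* Let $s>1/2$. For $\tau\in\mathbb R$ let $\mathcal H_1(\tau)e_n=e^{-in^3\tau}e_n$, $n\in\mathbb Z$, and for $w\in H^s$ set $$\widetilde H(\tau,w):=\mathcal H_1(-\tau)\big(\mathcal H_1(\tau)w\cdot\partial_x\mathcal H_1(\tau)w\big).$$ Then $\widetilde H(\tau,\cdot)$ is well defined and smooth from $H^s$ to $H^{s-1}$ with $\|\widetilde H(\tau,w)\|_{H^{s-1}}\le C_s\|w\|_{H^s}^2$, $C_s$ independent of $\tau$. Moreover, $\widetilde H$ is $2\pi$-periodic in $\tau$ and its time average is $$K(w):=\frac1{2\pi}\int_0^{2\pi}\widetilde H(\tau,w)\,d\tau=w_0\,\partial_x w+ie_0\sum_{n\in\mathbb Z}nw_nw_{-n}=w_0\sum_{n\in\mathbb Z}inw_ne_n+\Big(\sum_{n\in\mathbb Z}inw_nw_{-n}\Big)e_0,$$ where $w_0=\frac1{2\pi}\int_{-\pi}^{\pi}w(x)\,dx$.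
   Context: $e_n(x)=e^{inx}$; $w=\sum_n w_ne_n$; $H^s$ is the space of complex-valued $2\pi$-periodic functions with $\|w\|_{H^s}^2=\sum_n(|n|^2+1)^s|w_n|^2<\infty$. *)

theory Defs
  imports "HOL-Analysis.Analysis"
begin

text \<open>A 2pi-periodic function w = sum_n w_n e_n is represented by its Fourier
coefficient sequence w :: int => complex.\<close>

definition in_Hs :: "real \<Rightarrow> (int \<Rightarrow> complex) \<Rightarrow> bool" where
  "in_Hs s w \<longleftrightarrow>
     (\<lambda>n. ((real_of_int n)\<^sup>2 + 1) powr s * (cmod (w n))\<^sup>2) summable_on UNIV"

definition Hs_norm :: "real \<Rightarrow> (int \<Rightarrow> complex) \<Rightarrow> real" where
  "Hs_norm s w = sqrt (\<Sum>\<^sub>\<infinity>n. ((real_of_int n)\<^sup>2 + 1) powr s * (cmod (w n))\<^sup>2)"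

definition H1 :: "real \<Rightarrow> (int \<Rightarrow> complex) \<Rightarrow> (int \<Rightarrow> complex)" where
  "H1 \<tau> w = (\<lambda>n. exp (- \<i> * of_int (n ^ 3) * of_real \<tau>) * w n)"

definition Dx :: "(int \<Rightarrow> complex) \<Rightarrow> (int \<Rightarrow> complex)" where
  "Dx w = (\<lambda>n. \<i> * of_int n * w n)"

text \<open>product of two functions, on Fourier coefficients (convolution)\<close>
definition fprod :: "(int \<Rightarrow> complex) \<Rightarrow> (int \<Rightarrow> complex) \<Rightarrow> (int \<Rightarrow> complex)" where
  "fprod f g = (\<lambda>n. \<Sum>\<^sub>\<infinity>k. f k * g (n - k))"

definition Htilde :: "real \<Rightarrow> (int \<Rightarrow> complex) \<Rightarrow> (int \<Rightarrow> complex)" where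
  "Htilde \<tau> w = H1 (- \<tau>) (fprod (H1 \<tau> w) (Dx (H1 \<tau> w)))"

definition Kavg :: "(int \<Rightarrow> complex) \<Rightarrow> (int \<Rightarrow> complex)" where
  "Kavg w = (\<lambda>n. w 0 * (\<i> * of_int n * w n)
     + (if n = 0 then (\<Sum>\<^sub>\<infinity>m. \<i> * of_int m * w m * w (- m)) else 0))"

definition multilin_bdd ::
  "real \<Rightarrow> real \<Rightarrow> nat \<Rightarrow> ((int \<Rightarrow> complex) list \<Rightarrow> (int \<Rightarrow> complex)) \<Rightarrow> bool" where
  "multilin_bdd s t k M \<longleftrightarrow>
     (\<forall>hs. length hs = k \<and> (\<forall>h\<in>set hs. in_Hs s h) \<longrightarrow> in_Hs t (M hs)) \<and>
     (\<forall>i<k. \<forall>hs a b. \<forall>c::real. length hs = k \<and> (\<forall>h\<in>set hs. in_Hs s h) \<and> in_Hs s a \<and> in_Hs s b \<longrightarrow>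
         M (hs[i := (\<lambda>n. of_real c * a n + b n)])
           = (\<lambda>n. of_real c * M (hs[i := a]) n + M (hs[i := b]) n)) \<and>
     (\<exists>C. \<forall>hs. length hs = k \<and> (\<forall>h\<in>set hs. in_Hs s h) \<longrightarrow>
         Hs_norm t (M hs) \<le> C * (\<Prod>h\<leftarrow>hs. Hs_norm s h))"

text \<open>F : H^s -> H^t is C^infinity (Frechet): there is a family D k w of bounded
k-linear maps with D 0 w [] = F w and D (k+1) w the Frechet derivative of w |-> D k w
(in the operator norm of k-linear maps).\<close>
definition smooth_Hs :: "real \<Rightarrow> real \<Rightarrow> ((int \<Rightarrow> complex) \<Rightarrow> (int \<Rightarrow> complex)) \<Rightarrow> bool" where
  "smooth_Hs s t F \<longleftrightarrow>
    (\<exists>D :: nat \<Rightarrow> (int \<Rightarrow> complex) \<Rightarrow> (int \<Rightarrow> complex) list \<Rightarrow> (int \<Rightarrow> complex).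
      (\<forall>w. in_Hs s w \<longrightarrow> D 0 w [] = F w) \<and>
      (\<forall>k w. in_Hs s w \<longrightarrow> multilin_bdd s t k (D k w)) \<and>
      (\<forall>k w. in_Hs s w \<longrightarrow>
         (\<forall>\<epsilon>>0. \<exists>\<delta>>0. \<forall>h. in_Hs s h \<and> Hs_norm s h < \<delta> \<longrightarrow>
            (\<forall>hs. length hs = k \<and> (\<forall>g\<in>set hs. in_Hs s g \<and> Hs_norm s g \<le> 1) \<longrightarrow>
               Hs_norm t (\<lambda>n. D k (\<lambda>m. w m + h m) hs n - D k w hs n - D (Suc k) w (h # hs) n)
                 \<le> \<epsilon> * Hs_norm s h))))"

end

theory Submission
  imports Defs
begin

text \<open>
  In Fourier coefficients, $\widetilde H(\tau, w)_n = \sum_k i(n - k)\, w_k w_{n-k}\, e^{3i\tau nk(n-k)}$.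
  By the Leibniz rule $\widetilde H(\tau, w)$ is half the diagonal of the symmetric bilinear form
  $B_\tau(u, v) = \mathcal H_1(-\tau)\,\partial_x(\mathcal H_1(\tau)u \cdot \mathcal H_1(\tau)v)$.
  Since $\mathcal H_1(\tau)$ is unitary on every $H^s$, the bound on $B_\tau$ reduces to the algebra
  property of $H^s$ for $s > 1/2$, and the quadratic form of a bounded symmetric bilinear map is
  smooth. Averaging over a period kills every phase with $nk(n - k) \neq 0$; the surviving resonant
  terms ($k = 0$, and all $k$ when $n = 0$) make up $K(w)$.
\<close>

section \<open>Weighted sequence spaces\<close>

definition sobolev_weight :: "real \<Rightarrow> int \<Rightarrow> real" where
  "sobolev_weight s n = ((real_of_int n)\<^sup>2 + 1) powr s"

lemma sobolev_weight_pos [simp]: "sobolev_weight s n > 0"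
proof -
  have "(real_of_int n)\<^sup>2 + 1 > 0" by (simp add: add_nonneg_pos)
  thus ?thesis unfolding sobolev_weight_def by simp
qed

lemma sobolev_weight_nonneg [simp]: "sobolev_weight s n \<ge> 0"
  using sobolev_weight_pos[of s n] by linarith

lemma sobolev_weight_mult: "sobolev_weight a n * sobolev_weight b n = sobolev_weight (a + b) n"
  unfolding sobolev_weight_def by (simp add: powr_add add_nonneg_pos)

lemma sobolev_weight_mono: "a \<le> b \<Longrightarrow> sobolev_weight a n \<le> sobolev_weight b n"
  unfolding sobolev_weight_def by (rule powr_mono) auto

lemma sobolev_weight_zero [simp]: "sobolev_weight 0 n = 1"
  using sobolev_weight_pos[of 0 n] by (auto simp: sobolev_weight_def split: if_splits)

lemma sobolev_weight_ge_1: "a \<ge> 0 \<Longrightarrow> sobolev_weight a n \<ge> 1"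
  using sobolev_weight_mono[of 0 a n] by simp

lemma in_Hs_iff_weight: "in_Hs s w \<longleftrightarrow> (\<lambda>n. sobolev_weight s n * (cmod (w n))\<^sup>2) summable_on UNIV"
  unfolding in_Hs_def sobolev_weight_def ..

lemma Hs_norm_weight: "Hs_norm s w = sqrt (\<Sum>\<^sub>\<infinity>n. sobolev_weight s n * (cmod (w n))\<^sup>2)"
  unfolding Hs_norm_def sobolev_weight_def ..

lemma Hs_norm_nonneg [simp]: "Hs_norm s w \<ge> 0"
  unfolding Hs_norm_weight by (simp add: infsum_nonneg)

lemma Hs_norm_squared: "(Hs_norm s w)\<^sup>2 = (\<Sum>\<^sub>\<infinity>n. sobolev_weight s n * (cmod (w n))\<^sup>2)"
  unfolding Hs_norm_weight by (simp add: infsum_nonneg)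

lemma in_Hs_zero [simp]: "in_Hs t (\<lambda>n. 0)"
  unfolding in_Hs_iff_weight by simp

lemma Hs_norm_zero [simp]: "Hs_norm t (\<lambda>n. 0) = 0"
  unfolding Hs_norm_weight by simp

lemma Hs_norm_scale: "Hs_norm t (\<lambda>n. c * v n) = cmod c * Hs_norm t v"
proof -
  have "(\<Sum>\<^sub>\<infinity>n. sobolev_weight t n * (cmod (c * v n))\<^sup>2)
      = (cmod c)\<^sup>2 * (\<Sum>\<^sub>\<infinity>n. sobolev_weight t n * (cmod (v n))\<^sup>2)"
    by (simp add: norm_mult power_mult_distrib algebra_simps flip: infsum_cmult_right')
  thus ?thesis unfolding Hs_norm_weight by (simp add: real_sqrt_mult)
qed

lemma summable_sobolev_weight:
  assumes "s > 1/2"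
  shows "(\<lambda>k. sobolev_weight (-s) k) summable_on UNIV"
proof -
  have "summable (\<lambda>n::nat. ((real n)\<^sup>2 + 1) powr (-s))"
  proof (rule summable_comparison_test'[where N=1])
    show "summable (\<lambda>n::nat. real n powr (-(s + s)))"
      using assms by (subst summable_real_powr_iff) simp
    fix n :: nat assume "n \<ge> 1"
    hence "((real n)\<^sup>2 + 1) powr (-s) \<le> ((real n)\<^sup>2) powr (-s)"
      using assms by (intro powr_mono2') auto
    also have "\<dots> = real n powr (-(s + s))"
      by (simp add: powr_powr flip: powr_numeral)
    finally show "norm (((real n)\<^sup>2 + 1) powr (-s)) \<le> real n powr (-(s + s))" by simp
  qed
  hence nat: "(\<lambda>n::nat. ((real n)\<^sup>2 + 1) powr (-s)) summable_on UNIV"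
    by (subst summable_on_UNIV_nonneg_real_iff) auto
  have "(\<lambda>k. sobolev_weight (-s) k) summable_on range int"
    by (subst summable_on_reindex) (use nat in \<open>auto simp: o_def sobolev_weight_def\<close>)
  moreover have "(\<lambda>k. sobolev_weight (-s) k) summable_on range (\<lambda>n. - int n)"
    by (subst summable_on_reindex) (use nat in \<open>auto simp: o_def sobolev_weight_def inj_on_def\<close>)
  moreover have "(UNIV :: int set) = range int \<union> range (\<lambda>n. - int n)"
    by (auto simp: image_def) (metis int_cases2)
  ultimately show ?thesis using summable_on_union by metis
qed

lemma in_Hs_mono:
  assumes "t \<le> s" "in_Hs s w"
  shows "in_Hs t w"
  using assms unfolding in_Hs_iff_weight
  by (elim summable_on_comparison_test) (auto intro: mult_right_mono sobolev_weight_mono)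

lemma Hs_dominated:
  assumes "in_Hs s v" "K \<ge> 0"
    and "\<And>n. sobolev_weight t n * (cmod (u n))\<^sup>2 \<le> K * (sobolev_weight s n * (cmod (v n))\<^sup>2)"
  shows "in_Hs t u" "Hs_norm t u \<le> sqrt K * Hs_norm s v"
proof -
  have v: "(\<lambda>n. sobolev_weight s n * (cmod (v n))\<^sup>2) summable_on UNIV"
    using assms(1) by (simp add: in_Hs_iff_weight)
  show u: "in_Hs t u" unfolding in_Hs_iff_weight
    by (rule summable_on_comparison_test[OF summable_on_cmult_right[OF v, of K]]) (use assms in auto)
  have "(\<Sum>\<^sub>\<infinity>n. sobolev_weight t n * (cmod (u n))\<^sup>2) \<le> (\<Sum>\<^sub>\<infinity>n. K * (sobolev_weight s n * (cmod (v n))\<^sup>2))"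
    by (rule infsum_mono) (use u v assms in \<open>auto simp: in_Hs_iff_weight intro: summable_on_cmult_right\<close>)
  hence "(Hs_norm t u)\<^sup>2 \<le> (sqrt K * Hs_norm s v)\<^sup>2"
    using assms(2) by (simp add: Hs_norm_squared power_mult_distrib infsum_cmult_right')
  thus "Hs_norm t u \<le> sqrt K * Hs_norm s v"
    by (rule power2_le_imp_le) (use assms(2) in simp)
qed

lemma in_Hs_lincomb:
  assumes "in_Hs s a" "in_Hs s b"
  shows "in_Hs s (\<lambda>n. c * a n + b n)"
  unfolding in_Hs_iff_weight
proof (rule summable_on_comparison_test)
  show "(\<lambda>n. 2 * (cmod c)\<^sup>2 * (sobolev_weight s n * (cmod (a n))\<^sup>2) + 2 * (sobolev_weight s n * (cmod (b n))\<^sup>2))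
      summable_on UNIV"
    using assms unfolding in_Hs_iff_weight by (intro summable_on_add summable_on_cmult_right)
  fix n
  have "(cmod (c * a n + b n))\<^sup>2 \<le> (cmod c * cmod (a n) + cmod (b n))\<^sup>2"
    by (rule power_mono) (auto simp: norm_mult intro: norm_triangle_le)
  also have "\<dots> \<le> 2 * (cmod c)\<^sup>2 * (cmod (a n))\<^sup>2 + 2 * (cmod (b n))\<^sup>2"
    using sum_squares_ge_zero[of "cmod c * cmod (a n) - cmod (b n)" 0]
    by (simp add: power2_eq_square algebra_simps)
  finally have "sobolev_weight s n * (cmod (c * a n + b n))\<^sup>2
      \<le> sobolev_weight s n * (2 * (cmod c)\<^sup>2 * (cmod (a n))\<^sup>2 + 2 * (cmod (b n))\<^sup>2)"
    by (rule mult_left_mono) simp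
  thus "sobolev_weight s n * (cmod (c * a n + b n))\<^sup>2
      \<le> 2 * (cmod c)\<^sup>2 * (sobolev_weight s n * (cmod (a n))\<^sup>2) + 2 * (sobolev_weight s n * (cmod (b n))\<^sup>2)"
    by (simp add: algebra_simps)
qed simp

lemma in_Hs_add: "in_Hs s a \<Longrightarrow> in_Hs s b \<Longrightarrow> in_Hs s (\<lambda>n. a n + b n)"
  using in_Hs_lincomb[of s a b 1] by simp

section \<open>Convolution inequalities\<close>

lemma infsum_Cauchy_Schwarz:
  fixes f g :: "'a \<Rightarrow> real"
  assumes f0: "\<And>k. f k \<ge> 0" and g0: "\<And>k. g k \<ge> 0"
    and fg: "(\<lambda>k. (f k)\<^sup>2 * g k) summable_on UNIV" and g: "g summable_on UNIV"
  shows "(\<lambda>k. f k * g k) summable_on UNIV"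
    and "(\<Sum>\<^sub>\<infinity>k. f k * g k)\<^sup>2 \<le> (\<Sum>\<^sub>\<infinity>k. (f k)\<^sup>2 * g k) * (\<Sum>\<^sub>\<infinity>k. g k)"
proof -
  define A B where "A = (\<Sum>\<^sub>\<infinity>k. (f k)\<^sup>2 * g k)" and "B = (\<Sum>\<^sub>\<infinity>k. g k)"
  have AB: "A * B \<ge> 0" unfolding A_def B_def by (simp add: f0 g0 infsum_nonneg)
  have finite: "(\<Sum>k\<in>F. f k * g k) \<le> sqrt (A * B)" if "finite F" for F
  proof (rule real_le_rsqrt)
    have "(\<Sum>k\<in>F. f k * g k)\<^sup>2 = (\<Sum>k\<in>F. (f k * sqrt (g k)) * sqrt (g k))\<^sup>2"
      using g0 by (simp add: mult.assoc)
    also have "\<dots> \<le> (\<Sum>k\<in>F. (f k * sqrt (g k))\<^sup>2) * (\<Sum>k\<in>F. (sqrt (g k))\<^sup>2)"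
      by (rule Cauchy_Schwarz_ineq_sum)
    also have "\<dots> = (\<Sum>k\<in>F. (f k)\<^sup>2 * g k) * (\<Sum>k\<in>F. g k)"
      using g0 by (simp add: power_mult_distrib)
    also have "\<dots> \<le> A * B" unfolding A_def B_def
      by (intro mult_mono finite_sum_le_infsum fg g that) (auto simp: f0 g0 sum_nonneg infsum_nonneg)
    finally show "(\<Sum>k\<in>F. f k * g k)\<^sup>2 \<le> A * B" .
  qed
  show sm: "(\<lambda>k. f k * g k) summable_on UNIV"
    by (rule nonneg_bdd_above_summable_on) (use f0 g0 finite in \<open>auto simp: bdd_above_def\<close>)
  have "(\<Sum>\<^sub>\<infinity>k. f k * g k) \<le> sqrt (A * B)"
    by (rule infsum_le_finite_sums[OF sm finite])
  moreover have "(\<Sum>\<^sub>\<infinity>k. f k * g k) \<ge> 0" by (simp add: f0 g0 infsum_nonneg)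
  ultimately have "(\<Sum>\<^sub>\<infinity>k. f k * g k)\<^sup>2 \<le> (sqrt (A * B))\<^sup>2" by (rule power_mono)
  thus "(\<Sum>\<^sub>\<infinity>k. f k * g k)\<^sup>2 \<le> (\<Sum>\<^sub>\<infinity>k. (f k)\<^sup>2 * g k) * (\<Sum>\<^sub>\<infinity>k. g k)"
    using AB by (simp add: A_def B_def)
qed

lemma bij_betw_int_reflect: "bij_betw (\<lambda>k::int. n - k) UNIV UNIV"
  by (rule bij_betwI[where g="\<lambda>k. n - k"]) auto

lemma summable_on_reflect: "(\<lambda>k::int. f (n - k)) summable_on UNIV \<longleftrightarrow> f summable_on UNIV"
  by (rule summable_on_reindex_bij_betw[OF bij_betw_int_reflect])

lemma infsum_reflect: "(\<Sum>\<^sub>\<infinity>k::int. f (n - k)) = infsum f UNIV"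
  by (rule infsum_reindex_bij_betw[OF bij_betw_int_reflect])

lemma infsum_sum_swap:
  fixes f :: "'b \<Rightarrow> 'a \<Rightarrow> real"
  assumes "finite N" "\<And>n. n \<in> N \<Longrightarrow> f n summable_on UNIV"
  shows "(\<lambda>k. \<Sum>n\<in>N. f n k) summable_on UNIV" "(\<Sum>\<^sub>\<infinity>k. \<Sum>n\<in>N. f n k) = (\<Sum>n\<in>N. \<Sum>\<^sub>\<infinity>k. f n k)"
  using assms by (induction N rule: finite_induct) (auto simp: infsum_add summable_on_add)

lemma sum_reflect_le_infsum:
  fixes G :: "int \<Rightarrow> real"
  assumes "G summable_on UNIV" "\<And>k. G k \<ge> 0" "finite N"
  shows "(\<Sum>n\<in>N. G (n - k)) \<le> (\<Sum>\<^sub>\<infinity>k. G k)"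
proof -
  have "(\<Sum>n\<in>N. G (n - k)) = sum G ((\<lambda>n. n - k) ` N)"
    by (subst sum.reindex) (auto simp: inj_on_def)
  also have "\<dots> \<le> (\<Sum>\<^sub>\<infinity>k. G k)"
    by (rule finite_sum_le_infsum) (use assms in auto)
  finally show ?thesis .
qed

lemma Young_l2_l1:
  fixes F G :: "int \<Rightarrow> real"
  assumes F0: "\<And>k. F k \<ge> 0" and G0: "\<And>k. G k \<ge> 0"
    and F: "(\<lambda>k. (F k)\<^sup>2) summable_on UNIV" and G: "G summable_on UNIV"
  shows "(\<lambda>k. F k * G (n - k)) summable_on UNIV"
    and "(\<lambda>n. (\<Sum>\<^sub>\<infinity>k. F k * G (n - k))\<^sup>2) summable_on UNIV"
    and "(\<Sum>\<^sub>\<infinity>n. (\<Sum>\<^sub>\<infinity>k. F k * G (n - k))\<^sup>2) \<le> (\<Sum>\<^sub>\<infinity>k. (F k)\<^sup>2) * (\<Sum>\<^sub>\<infinity>k. G k)\<^sup>2"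
proof -
  define B where "B = (\<Sum>\<^sub>\<infinity>k. G k)"
  have G_le: "G k \<le> B" for k
    using sum_reflect_le_infsum[OF G G0, of "{k}" 0] by (simp add: B_def)
  have B0: "B \<ge> 0" using G_le[of 0] G0[of 0] by linarith
  have FG: "(\<lambda>k. (F k)\<^sup>2 * G (m - k)) summable_on UNIV" for m
    by (rule summable_on_comparison_test[OF summable_on_cmult_left[OF F, of B]])
       (simp_all add: G0 G_le mult_left_mono)
  have CS: "(\<lambda>k. F k * G (m - k)) summable_on UNIV"
    "(\<Sum>\<^sub>\<infinity>k. F k * G (m - k))\<^sup>2 \<le> (\<Sum>\<^sub>\<infinity>k. (F k)\<^sup>2 * G (m - k)) * B" for m
    using infsum_Cauchy_Schwarz[of F "\<lambda>k. G (m - k)", OF F0 G0 FG] G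
    by (simp_all add: summable_on_reflect infsum_reflect B_def)
  thus "(\<lambda>k. F k * G (n - k)) summable_on UNIV" by blast
  have finite: "(\<Sum>n\<in>N. (\<Sum>\<^sub>\<infinity>k. F k * G (n - k))\<^sup>2) \<le> (\<Sum>\<^sub>\<infinity>k. (F k)\<^sup>2) * B\<^sup>2" if "finite N" for N
  proof -
    note swap = infsum_sum_swap[OF that, of "\<lambda>n k. (F k)\<^sup>2 * G (n - k)", OF FG]
    have "(\<Sum>n\<in>N. (\<Sum>\<^sub>\<infinity>k. F k * G (n - k))\<^sup>2) \<le> (\<Sum>n\<in>N. (\<Sum>\<^sub>\<infinity>k. (F k)\<^sup>2 * G (n - k)) * B)"
      by (rule sum_mono) (rule CS(2))
    also have "\<dots> = (\<Sum>\<^sub>\<infinity>k. \<Sum>n\<in>N. (F k)\<^sup>2 * G (n - k)) * B"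
      by (simp add: swap(2) sum_distrib_right)
    also have "\<dots> \<le> (\<Sum>\<^sub>\<infinity>k. (F k)\<^sup>2 * B) * B"
    proof (rule mult_right_mono[OF infsum_mono[OF swap(1) summable_on_cmult_left[OF F]] B0])
      fix k
      show "(\<Sum>n\<in>N. (F k)\<^sup>2 * G (n - k)) \<le> (F k)\<^sup>2 * B"
        using sum_reflect_le_infsum[OF G G0 that, of k]
        by (simp add: B_def mult_left_mono flip: sum_distrib_left)
    qed
    also have "\<dots> = (\<Sum>\<^sub>\<infinity>k. (F k)\<^sup>2) * B\<^sup>2"
      by (simp add: infsum_cmult_left' power2_eq_square)
    finally show ?thesis .
  qed
  show sm: "(\<lambda>n. (\<Sum>\<^sub>\<infinity>k. F k * G (n - k))\<^sup>2) summable_on UNIV"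
    by (rule nonneg_bdd_above_summable_on) (use finite in \<open>auto simp: bdd_above_def\<close>)
  show "(\<Sum>\<^sub>\<infinity>n. (\<Sum>\<^sub>\<infinity>k. F k * G (n - k))\<^sup>2) \<le> (\<Sum>\<^sub>\<infinity>k. (F k)\<^sup>2) * (\<Sum>\<^sub>\<infinity>k. G k)\<^sup>2"
    using infsum_le_finite_sums[OF sm] finite unfolding B_def by blast
qed

lemma Hs_l1_bound:
  assumes "s > 1/2" "in_Hs s w"
  shows "(\<lambda>k. cmod (w k)) summable_on UNIV"
    and "(\<Sum>\<^sub>\<infinity>k. cmod (w k))\<^sup>2 \<le> (\<Sum>\<^sub>\<infinity>k. sobolev_weight (-s) k) * (Hs_norm s w)\<^sup>2"
proof -
  have cancel: "sobolev_weight s k * sobolev_weight (-s) k = 1" for k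
    using sobolev_weight_mult[of s k "-s"] by simp
  have e1: "sobolev_weight s k * cmod (w k) * sobolev_weight (-s) k = cmod (w k)" for k
    using cancel[of k] by (simp add: algebra_simps)
  have e2: "(sobolev_weight s k * cmod (w k))\<^sup>2 * sobolev_weight (-s) k = sobolev_weight s k * (cmod (w k))\<^sup>2" for k
    using cancel[of k] by (simp add: power2_eq_square algebra_simps)
  have w: "(\<lambda>k. (sobolev_weight s k * cmod (w k))\<^sup>2 * sobolev_weight (-s) k) summable_on UNIV"
    using assms(2) by (simp only: e2 in_Hs_iff_weight)
  note CS = infsum_Cauchy_Schwarz[OF _ _ w summable_sobolev_weight[OF assms(1)], unfolded e1 e2]
  show "(\<lambda>k. cmod (w k)) summable_on UNIV" using CS(1) by simp
  show "(\<Sum>\<^sub>\<infinity>k. cmod (w k))\<^sup>2 \<le> (\<Sum>\<^sub>\<infinity>k. sobolev_weight (-s) k) * (Hs_norm s w)\<^sup>2"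
    using CS(2) by (simp add: Hs_norm_squared mult.commute)
qed

lemma sobolev_weight_triangle:
  assumes "s \<ge> 0"
  shows "sobolev_weight (s/2) n \<le> 2 powr s * (sobolev_weight (s/2) k + sobolev_weight (s/2) (n - k))"
proof -
  define x y z where "x = (real_of_int k)\<^sup>2 + 1" and "y = (real_of_int (n - k))\<^sup>2 + 1"
    and "z = (real_of_int n)\<^sup>2 + 1"
  have "x > 0" "y > 0" "z > 0" unfolding x_def y_def z_def by (simp_all add: add_nonneg_pos)
  have "z \<le> 2 * x + 2 * y"
    using sum_squares_ge_zero[of "real_of_int k - real_of_int (n - k)" 0]
    unfolding x_def y_def z_def by (simp add: power2_eq_square algebra_simps)
  hence "z powr (s/2) \<le> (4 * max x y) powr (s/2)"
    using \<open>z > 0\<close> assms by (intro powr_mono2) auto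
  also have "\<dots> = 2 powr s * max x y powr (s/2)"
    using \<open>x > 0\<close> \<open>y > 0\<close> by (simp add: powr_mult powr_powr flip: powr_numeral)
  also have "max x y powr (s/2) \<le> x powr (s/2) + y powr (s/2)"
    by (cases "x \<le> y") (simp_all add: max_def)
  finally show ?thesis
    unfolding sobolev_weight_def x_def y_def z_def by (simp add: mult_left_mono)
qed

lemma weighted_conv_l2:
  assumes s: "s > 1/2" and u: "in_Hs s u" and v: "in_Hs s v"
  shows "(\<lambda>k. sobolev_weight (s/2) k * cmod (u k) * cmod (v (n - k))) summable_on UNIV"
    and "(\<lambda>n. (\<Sum>\<^sub>\<infinity>k. sobolev_weight (s/2) k * cmod (u k) * cmod (v (n - k)))\<^sup>2) summable_on UNIV"
    and "(\<Sum>\<^sub>\<infinity>n. (\<Sum>\<^sub>\<infinity>k. sobolev_weight (s/2) k * cmod (u k) * cmod (v (n - k)))\<^sup>2)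
           \<le> (\<Sum>\<^sub>\<infinity>k. sobolev_weight (-s) k) * (Hs_norm s u)\<^sup>2 * (Hs_norm s v)\<^sup>2"
proof -
  define F where "F k = sobolev_weight (s/2) k * cmod (u k)" for k
  have F_sq: "(F k)\<^sup>2 = sobolev_weight s k * (cmod (u k))\<^sup>2" for k
    using sobolev_weight_mult[of "s/2" k "s/2"] by (simp add: F_def power2_eq_square algebra_simps)
  have F: "(\<lambda>k. (F k)\<^sup>2) summable_on UNIV" using u by (simp add: F_sq in_Hs_iff_weight)
  note Young = Young_l2_l1[of F "\<lambda>k. cmod (v k)", OF _ _ F Hs_l1_bound(1)[OF s v], unfolded F_def]
  show "(\<lambda>k. sobolev_weight (s/2) k * cmod (u k) * cmod (v (n - k))) summable_on UNIV"
    and "(\<lambda>n. (\<Sum>\<^sub>\<infinity>k. sobolev_weight (s/2) k * cmod (u k) * cmod (v (n - k)))\<^sup>2) summable_on UNIV"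
    using Young(1,2) by simp_all
  have "(\<Sum>\<^sub>\<infinity>n. (\<Sum>\<^sub>\<infinity>k. sobolev_weight (s/2) k * cmod (u k) * cmod (v (n - k)))\<^sup>2)
      \<le> (Hs_norm s u)\<^sup>2 * (\<Sum>\<^sub>\<infinity>k. cmod (v k))\<^sup>2"
    using Young(3) by (simp add: Hs_norm_squared F_sq[unfolded F_def])
  also have "\<dots> \<le> (Hs_norm s u)\<^sup>2 * ((\<Sum>\<^sub>\<infinity>k. sobolev_weight (-s) k) * (Hs_norm s v)\<^sup>2)"
    by (rule mult_left_mono[OF Hs_l1_bound(2)[OF s v]]) simp
  finally show "(\<Sum>\<^sub>\<infinity>n. (\<Sum>\<^sub>\<infinity>k. sobolev_weight (s/2) k * cmod (u k) * cmod (v (n - k)))\<^sup>2)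
      \<le> (\<Sum>\<^sub>\<infinity>k. sobolev_weight (-s) k) * (Hs_norm s u)\<^sup>2 * (Hs_norm s v)\<^sup>2"
    by (simp add: algebra_simps)
qed

lemma summable_on_conv_norm:
  assumes "s > 1/2" "in_Hs s u" "in_Hs s v"
  shows "(\<lambda>k. norm (u k * v (n - k))) summable_on UNIV"
proof (rule summable_on_comparison_test[OF weighted_conv_l2(1)[OF assms]])
  fix k
  show "norm (u k * v (n - k)) \<le> sobolev_weight (s/2) k * cmod (u k) * cmod (v (n - k))"
    using mult_right_mono[OF sobolev_weight_ge_1[of "s/2" k], of "cmod (u k) * cmod (v (n - k))"] assms(1)
    by (simp add: norm_mult mult.assoc)
qed simp

lemma fprod_weighted_coeff_le:
  assumes s: "s > 1/2" and u: "in_Hs s u" and v: "in_Hs s v"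
  shows "sobolev_weight (s/2) m * cmod (fprod u v m)
    \<le> 2 powr s * ((\<Sum>\<^sub>\<infinity>k. sobolev_weight (s/2) k * cmod (u k) * cmod (v (m - k)))
                 + (\<Sum>\<^sub>\<infinity>k. sobolev_weight (s/2) k * cmod (v k) * cmod (u (m - k))))"
proof -
  define p where "p = sobolev_weight (s/2)"
  note X = weighted_conv_l2(1)[OF s u v, folded p_def]
  have "(\<lambda>k. p (m - k) * cmod (v (m - k)) * cmod (u (m - (m - k)))) summable_on UNIV"
    using weighted_conv_l2(1)[OF s v u, folded p_def]
    by (subst summable_on_reflect[of "\<lambda>k. p k * cmod (v k) * cmod (u (m - k))"])
  hence Y: "(\<lambda>k. cmod (u k) * (p (m - k) * cmod (v (m - k)))) summable_on UNIV"
    by (simp add: ac_simps)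
  have Y_eq: "(\<Sum>\<^sub>\<infinity>k. cmod (u k) * (p (m - k) * cmod (v (m - k))))
      = (\<Sum>\<^sub>\<infinity>k. p k * cmod (v k) * cmod (u (m - k)))"
    using infsum_reflect[of "\<lambda>k. p k * cmod (v k) * cmod (u (m - k))" m] by (simp add: mult.commute)
  have "p m * cmod (fprod u v m) \<le> p m * (\<Sum>\<^sub>\<infinity>k. norm (u k * v (m - k)))"
    unfolding fprod_def
    by (intro mult_left_mono norm_infsum_bound summable_on_conv_norm[OF s u v]) (simp add: p_def)
  also have "\<dots> = (\<Sum>\<^sub>\<infinity>k. p m * (cmod (u k) * cmod (v (m - k))))"
    by (simp add: norm_mult infsum_cmult_right')
  also have "\<dots> \<le> (\<Sum>\<^sub>\<infinity>k. 2 powr s * (p k * cmod (u k) * cmod (v (m - k))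
                                   + cmod (u k) * (p (m - k) * cmod (v (m - k)))))"
  proof (rule infsum_mono)
    show "(\<lambda>k. p m * (cmod (u k) * cmod (v (m - k)))) summable_on UNIV"
      using summable_on_conv_norm[OF s u v] by (simp add: norm_mult summable_on_cmult_right)
    show "(\<lambda>k. 2 powr s * (p k * cmod (u k) * cmod (v (m - k))
              + cmod (u k) * (p (m - k) * cmod (v (m - k))))) summable_on UNIV"
      by (intro summable_on_cmult_right summable_on_add X Y)
    fix k
    have "p m * (cmod (u k) * cmod (v (m - k)))
        \<le> 2 powr s * (p k + p (m - k)) * (cmod (u k) * cmod (v (m - k)))"
      using sobolev_weight_triangle[of s m k] s by (simp add: p_def mult_right_mono)
    thus "p m * (cmod (u k) * cmod (v (m - k)))
        \<le> 2 powr s * (p k * cmod (u k) * cmod (v (m - k)) + cmod (u k) * (p (m - k) * cmod (v (m - k))))"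
      by (simp add: algebra_simps)
  qed
  also have "\<dots> = 2 powr s * ((\<Sum>\<^sub>\<infinity>k. p k * cmod (u k) * cmod (v (m - k)))
                             + (\<Sum>\<^sub>\<infinity>k. p k * cmod (v k) * cmod (u (m - k))))"
    by (simp add: infsum_cmult_right' infsum_add[OF X Y] Y_eq)
  finally show ?thesis unfolding p_def .
qed

definition Hs_algebra_const :: "real \<Rightarrow> real" where
  "Hs_algebra_const s = 2 * 2 powr s * sqrt (\<Sum>\<^sub>\<infinity>k. sobolev_weight (-s) k)"

lemma Hs_algebra_const_nonneg: "Hs_algebra_const s \<ge> 0"
  unfolding Hs_algebra_const_def by (simp add: infsum_nonneg)

text \<open>Peetre's inequality moves the weight onto one factor; Young's inequality together with
  $H^s \subseteq \ell^1$ (valid since $s > 1/2$) bounds the rest.\<close>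

lemma Hs_algebra:
  assumes s: "s > 1/2" and u: "in_Hs s u" and v: "in_Hs s v"
  shows "in_Hs s (fprod u v)"
    and "Hs_norm s (fprod u v) \<le> Hs_algebra_const s * Hs_norm s u * Hs_norm s v"
proof -
  define S where "S = (\<Sum>\<^sub>\<infinity>k. sobolev_weight (-s) k)"
  define X where "X u v m = (\<Sum>\<^sub>\<infinity>k. sobolev_weight (s/2) k * cmod (u k) * cmod (v (m - k)))"
    for u v :: "int \<Rightarrow> complex" and m
  define c where "c = 2 * (2 powr s)\<^sup>2"
  have coeff: "sobolev_weight s m * (cmod (fprod u v m))\<^sup>2 \<le> c * ((X u v m)\<^sup>2 + (X v u m)\<^sup>2)" for m
  proof -
    have "sobolev_weight s m * (cmod (fprod u v m))\<^sup>2 = (sobolev_weight (s/2) m * cmod (fprod u v m))\<^sup>2"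
      using sobolev_weight_mult[of "s/2" m "s/2"] by (simp add: power2_eq_square algebra_simps)
    also have "\<dots> \<le> (2 powr s * (X u v m + X v u m))\<^sup>2"
      by (rule power_mono[OF fprod_weighted_coeff_le[OF s u v, folded X_def]]) simp
    also have "\<dots> = (2 powr s)\<^sup>2 * (X u v m + X v u m)\<^sup>2" by (simp add: power_mult_distrib)
    also have "\<dots> \<le> (2 powr s)\<^sup>2 * (2 * ((X u v m)\<^sup>2 + (X v u m)\<^sup>2))"
      using sum_squares_ge_zero[of "X u v m - X v u m" 0]
      by (intro mult_left_mono) (simp_all add: power2_eq_square algebra_simps)
    also have "\<dots> = c * ((X u v m)\<^sup>2 + (X v u m)\<^sup>2)" by (simp add: c_def)
    finally show ?thesis .
  qed
  have XY: "(\<lambda>m. c * ((X u v m)\<^sup>2 + (X v u m)\<^sup>2)) summable_on UNIV"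
    unfolding X_def by (intro summable_on_cmult_right summable_on_add weighted_conv_l2(2) s u v)
  show fuv: "in_Hs s (fprod u v)" unfolding in_Hs_iff_weight
    by (rule summable_on_comparison_test[OF XY coeff]) simp
  have "(Hs_norm s (fprod u v))\<^sup>2 \<le> (\<Sum>\<^sub>\<infinity>m. c * ((X u v m)\<^sup>2 + (X v u m)\<^sup>2))"
    unfolding Hs_norm_squared by (rule infsum_mono[OF _ XY coeff]) (use fuv in \<open>simp add: in_Hs_iff_weight\<close>)
  also have "\<dots> = c * ((\<Sum>\<^sub>\<infinity>m. (X u v m)\<^sup>2) + (\<Sum>\<^sub>\<infinity>m. (X v u m)\<^sup>2))"
    unfolding X_def by (simp add: infsum_cmult_right' infsum_add weighted_conv_l2(2)[OF s] u v)
  also have "\<dots> \<le> c * (2 * (S * (Hs_norm s u)\<^sup>2 * (Hs_norm s v)\<^sup>2))"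
    using weighted_conv_l2(3)[OF s u v] weighted_conv_l2(3)[OF s v u]
    by (intro mult_left_mono) (simp_all add: c_def S_def X_def algebra_simps)
  also have "\<dots> = (Hs_algebra_const s * Hs_norm s u * Hs_norm s v)\<^sup>2"
    by (simp add: c_def S_def Hs_algebra_const_def power_mult_distrib infsum_nonneg)
  finally show "Hs_norm s (fprod u v) \<le> Hs_algebra_const s * Hs_norm s u * Hs_norm s v"
    by (rule power2_le_imp_le) (simp add: Hs_algebra_const_nonneg)
qed

lemma abs_le_sobolev_weight_half: "\<bar>real_of_int m\<bar> \<le> sobolev_weight (1/2) m"
proof -
  have "\<bar>real_of_int m\<bar> = sqrt ((real_of_int m)\<^sup>2)" by simp
  also have "\<dots> \<le> sqrt ((real_of_int m)\<^sup>2 + 1)" by (rule real_sqrt_le_mono) simp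
  finally show ?thesis unfolding sobolev_weight_def by (simp add: powr_half_sqrt add_nonneg_pos)
qed

lemma sobolev_weight_diff_le:
  "sobolev_weight (1/4) (n - k) \<le> 2 powr (1/4) * sobolev_weight (1/4) n * sobolev_weight (1/4) k"
proof -
  have "(real_of_int (n - k))\<^sup>2 + 1 \<le> 2 * (((real_of_int n)\<^sup>2 + 1) * ((real_of_int k)\<^sup>2 + 1))"
    using zero_le_power2[of "real_of_int n + real_of_int k"] zero_le_power2[of "real_of_int n * real_of_int k"]
    by (simp add: power2_eq_square algebra_simps)
  hence "sobolev_weight (1/4) (n - k) \<le> (2 * (((real_of_int n)\<^sup>2 + 1) * ((real_of_int k)\<^sup>2 + 1))) powr (1/4)"
    unfolding sobolev_weight_def by (intro powr_mono2) (auto simp: add_nonneg_pos)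
  thus ?thesis by (simp add: sobolev_weight_def powr_mult add_nonneg_pos)
qed

lemma summable_on_conv_l2:
  fixes a b :: "int \<Rightarrow> real"
  assumes "\<And>k. a k \<ge> 0" "\<And>k. b k \<ge> 0"
    and "(\<lambda>k. (a k)\<^sup>2) summable_on UNIV" "(\<lambda>k. (b k)\<^sup>2) summable_on UNIV"
  shows "(\<lambda>k. a k * b (n - k)) summable_on UNIV"
proof (rule summable_on_comparison_test)
  show "(\<lambda>k. (a k)\<^sup>2 + (b (n - k))\<^sup>2) summable_on UNIV"
    using assms(3,4) summable_on_reflect[of "\<lambda>k. (b k)\<^sup>2"] by (intro summable_on_add) simp_all
  fix k
  show "a k * b (n - k) \<le> (a k)\<^sup>2 + (b (n - k))\<^sup>2"
    using sum_squares_ge_zero[of "a k - b (n - k)" 0] mult_nonneg_nonneg[OF assms(1,2), of k "n - k"]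
    by (simp add: power2_eq_square algebra_simps)
qed (simp add: assms)

text \<open>The loss of one derivative is split evenly: $|n - k| \lesssim \langle n\rangle^{1/2}
  \langle k\rangle^{1/2} \langle n - k\rangle^{1/2}$, so the convolution converges already for
  $u, v \in H^{1/2}$.\<close>

lemma summable_on_conv_Dx:
  assumes u: "in_Hs (1/2) u" and v: "in_Hs (1/2) v"
  shows "(\<lambda>k. norm (u k * Dx v (n - k))) summable_on UNIV"
proof -
  define q where "q = sobolev_weight (1/4)"
  have qq: "q k * q k = sobolev_weight (1/2) k" for k
    using sobolev_weight_mult[of "1/4" k "1/4"] by (simp add: q_def)
  have "(q k * cmod (w k))\<^sup>2 = sobolev_weight (1/2) k * (cmod (w k))\<^sup>2" for k w
    by (simp add: power2_eq_square ac_simps flip: qq)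
  hence l2: "(\<lambda>k. (q k * cmod (w k))\<^sup>2) summable_on UNIV" if "in_Hs (1/2) w" for w
    using that by (simp add: in_Hs_iff_weight)
  have conv: "(\<lambda>k. q k * cmod (u k) * (q (n - k) * cmod (v (n - k)))) summable_on UNIV"
    using summable_on_conv_l2[OF _ _ l2[OF u] l2[OF v]] by (simp add: q_def)
  show ?thesis
  proof (rule summable_on_comparison_test[OF summable_on_cmult_right[OF conv, of "2 powr (1/4) * q n"]])
    fix k
    have "norm (u k * Dx v (n - k)) = cmod (u k) * \<bar>real_of_int (n - k)\<bar> * cmod (v (n - k))"
      unfolding Dx_def by (simp add: norm_mult del: of_int_diff)
    also have "\<dots> \<le> cmod (u k) * (q (n - k) * q (n - k)) * cmod (v (n - k))"
      using abs_le_sobolev_weight_half[of "n - k"]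
      by (intro mult_right_mono mult_left_mono) (auto simp: qq)
    also have "\<dots> \<le> cmod (u k) * ((2 powr (1/4) * q n * q k) * q (n - k)) * cmod (v (n - k))"
      using sobolev_weight_diff_le[of n k]
      by (intro mult_right_mono mult_left_mono) (auto simp: q_def)
    also have "\<dots> = 2 powr (1/4) * q n * (q k * cmod (u k) * (q (n - k) * cmod (v (n - k))))"
      by (simp add: algebra_simps)
    finally show "norm (u k * Dx v (n - k))
        \<le> 2 powr (1/4) * q n * (q k * cmod (u k) * (q (n - k) * cmod (v (n - k))))" .
  qed simp
qed

section \<open>The bilinear form behind the nonlinearity\<close>

lemma cmod_H1 [simp]: "cmod (H1 \<tau> w n) = cmod (w n)"
  unfolding H1_def by (simp add: norm_mult norm_exp_eq_Re)

lemma in_Hs_H1 [simp]: "in_Hs s (H1 \<tau> w) \<longleftrightarrow> in_Hs s w"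
  unfolding in_Hs_iff_weight by simp

lemma Hs_norm_H1 [simp]: "Hs_norm s (H1 \<tau> w) = Hs_norm s w"
  unfolding Hs_norm_weight by simp

lemma H1_lincomb: "H1 \<tau> (\<lambda>n. c * a n + b n) = (\<lambda>n. c * H1 \<tau> a n + H1 \<tau> b n)"
  unfolding H1_def by (simp add: algebra_simps)

lemma Dx_weight_le:
  "sobolev_weight (s - 1) n * (cmod (Dx f n))\<^sup>2 \<le> 1 * (sobolev_weight s n * (cmod (f n))\<^sup>2)"
proof -
  have "sobolev_weight (s - 1) n * (cmod (Dx f n))\<^sup>2 = sobolev_weight (s - 1) n * (real_of_int n)\<^sup>2 * (cmod (f n))\<^sup>2"
    unfolding Dx_def by (simp add: norm_mult power_mult_distrib)
  also have "\<dots> \<le> sobolev_weight (s - 1) n * sobolev_weight 1 n * (cmod (f n))\<^sup>2"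
    by (intro mult_right_mono mult_left_mono) (auto simp: sobolev_weight_def)
  also have "\<dots> = sobolev_weight s n * (cmod (f n))\<^sup>2"
    by (simp add: sobolev_weight_mult)
  finally show ?thesis by simp
qed

definition Hbilin :: "real \<Rightarrow> (int \<Rightarrow> complex) \<Rightarrow> (int \<Rightarrow> complex) \<Rightarrow> (int \<Rightarrow> complex)" where
  "Hbilin \<tau> u v = H1 (- \<tau>) (Dx (fprod (H1 \<tau> u) (H1 \<tau> v)))"

lemma fprod_commute: "fprod u v = fprod v u"
proof
  fix n
  have "fprod u v n = (\<Sum>\<^sub>\<infinity>k. u (n - k) * v (n - (n - k)))"
    unfolding fprod_def by (rule infsum_reflect[symmetric])
  thus "fprod u v n = fprod v u n" unfolding fprod_def by (simp add: mult.commute)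
qed

lemma Hbilin_commute: "Hbilin \<tau> u v = Hbilin \<tau> v u"
  unfolding Hbilin_def by (simp add: fprod_commute)

lemma fprod_lincomb_right:
  assumes s: "s > 1/2" and u: "in_Hs s u" and a: "in_Hs s a" and b: "in_Hs s b"
  shows "fprod u (\<lambda>n. c * a n + b n) = (\<lambda>n. c * fprod u a n + fprod u b n)"
proof
  fix n
  have summable: "(\<lambda>k. u k * w (n - k)) summable_on UNIV" if "in_Hs s w" for w
    using summable_on_conv_norm[OF s u that] by (rule abs_summable_summable)
  have "fprod u (\<lambda>n. c * a n + b n) n = (\<Sum>\<^sub>\<infinity>k. c * (u k * a (n - k)) + u k * b (n - k))"
    unfolding fprod_def by (simp add: algebra_simps)
  also have "\<dots> = c * fprod u a n + fprod u b n"
    unfolding fprod_def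
    by (simp add: infsum_add summable_on_cmult_right summable a b infsum_cmult_right')
  finally show "fprod u (\<lambda>n. c * a n + b n) n = c * fprod u a n + fprod u b n" .
qed

lemma Hbilin_lincomb_right:
  assumes "s > 1/2" "in_Hs s u" "in_Hs s a" "in_Hs s b"
  shows "Hbilin \<tau> u (\<lambda>n. c * a n + b n) = (\<lambda>n. c * Hbilin \<tau> u a n + Hbilin \<tau> u b n)"
proof -
  have "fprod (H1 \<tau> u) (H1 \<tau> (\<lambda>n. c * a n + b n))
      = (\<lambda>n. c * fprod (H1 \<tau> u) (H1 \<tau> a) n + fprod (H1 \<tau> u) (H1 \<tau> b) n)"
    unfolding H1_lincomb by (rule fprod_lincomb_right) (use assms in simp_all)
  thus ?thesis unfolding Hbilin_def by (simp add: H1_def Dx_def algebra_simps)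
qed

lemma Hbilin_bound:
  assumes s: "s > 1/2" and u: "in_Hs s u" and v: "in_Hs s v"
  shows "in_Hs (s - 1) (Hbilin \<tau> u v)"
    and "Hs_norm (s - 1) (Hbilin \<tau> u v) \<le> Hs_algebra_const s * Hs_norm s u * Hs_norm s v"
proof -
  note alg = Hs_algebra[of s "H1 \<tau> u" "H1 \<tau> v"]
  have "sobolev_weight (s - 1) n * (cmod (Hbilin \<tau> u v n))\<^sup>2
      \<le> 1 * (sobolev_weight s n * (cmod (fprod (H1 \<tau> u) (H1 \<tau> v) n))\<^sup>2)" for n
    unfolding Hbilin_def using Dx_weight_le[of s n] by simp
  note dom = Hs_dominated[OF alg(1) _ this] 
  show "in_Hs (s - 1) (Hbilin \<tau> u v)" using dom(1) s u v by simp
  show "Hs_norm (s - 1) (Hbilin \<tau> u v) \<le> Hs_algebra_const s * Hs_norm s u * Hs_norm s v"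
    using dom(2) alg(2) s u v by simp
qed

text \<open>Leibniz rule: $w\,\partial_x w = \frac12 \partial_x (w^2)$ on the level of Fourier coefficients.\<close>

lemma Htilde_eq_half_Hbilin:
  assumes s: "s > 1/2" and w: "in_Hs s w"
  shows "Htilde \<tau> w = (\<lambda>n. Hbilin \<tau> w w n / 2)"
proof
  fix n
  define U where "U = H1 \<tau> w"
  have U: "in_Hs (1/2) U" using in_Hs_mono[of "1/2" s w] s w by (simp add: U_def)
  have S: "(\<lambda>k. U k * Dx U (n - k)) summable_on UNIV"
    using summable_on_conv_Dx[OF U U] by (rule abs_summable_summable)
  have S': "(\<lambda>k. U (n - k) * Dx U (n - (n - k))) summable_on UNIV"
    using S by (subst summable_on_reflect)
  have "(\<Sum>\<^sub>\<infinity>k. U (n - k) * Dx U (n - (n - k))) = fprod U (Dx U) n"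
    unfolding fprod_def by (rule infsum_reflect)
  hence "2 * fprod U (Dx U) n = (\<Sum>\<^sub>\<infinity>k. U k * Dx U (n - k) + U (n - k) * Dx U (n - (n - k)))"
    using infsum_add[OF S S'] unfolding fprod_def by simp
  also have "\<dots> = (\<Sum>\<^sub>\<infinity>k. \<i> * of_int n * (U k * U (n - k)))"
    by (rule infsum_cong) (simp add: Dx_def algebra_simps)
  also have "\<dots> = Dx (fprod U U) n" unfolding Dx_def fprod_def by (simp add: infsum_cmult_right')
  finally have "fprod U (Dx U) n = Dx (fprod U U) n / 2" by (simp add: field_simps)
  thus "Htilde \<tau> w n = Hbilin \<tau> w w n / 2"
    unfolding Htilde_def Hbilin_def U_def by (simp add: H1_def)
qed

section \<open>Smoothness of bounded quadratic forms\<close>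

lemma multilin_bdd_const: "in_Hs t v \<Longrightarrow> multilin_bdd s t 0 (\<lambda>hs. v)"
  unfolding multilin_bdd_def by (auto intro!: exI[of _ "Hs_norm t v"])

lemma multilin_bdd_zero: "multilin_bdd s t k (\<lambda>hs n. 0)"
  unfolding multilin_bdd_def by (auto intro!: exI[of _ 0])

locale Hs_bounded_symmetric_bilinear =
  fixes s t C :: real and B :: "(int \<Rightarrow> complex) \<Rightarrow> (int \<Rightarrow> complex) \<Rightarrow> (int \<Rightarrow> complex)"
  assumes maps_into: "in_Hs s u \<Longrightarrow> in_Hs s v \<Longrightarrow> in_Hs t (B u v)"
    and bounded: "in_Hs s u \<Longrightarrow> in_Hs s v \<Longrightarrow> Hs_norm t (B u v) \<le> C * Hs_norm s u * Hs_norm s v"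
    and commute: "B u v = B v u"
    and lincomb_right: "in_Hs s u \<Longrightarrow> in_Hs s a \<Longrightarrow> in_Hs s b \<Longrightarrow>
      B u (\<lambda>n. of_real c * a n + b n) = (\<lambda>n. of_real c * B u a n + B u b n)"
    and const_nonneg: "C \<ge> 0"
begin

lemma add_right: "in_Hs s u \<Longrightarrow> in_Hs s a \<Longrightarrow> in_Hs s b \<Longrightarrow> B u (\<lambda>n. a n + b n) = (\<lambda>n. B u a n + B u b n)"
  using lincomb_right[of u a b 1] by simp

lemma add_left: "in_Hs s u \<Longrightarrow> in_Hs s a \<Longrightarrow> in_Hs s b \<Longrightarrow> B (\<lambda>n. a n + b n) u = (\<lambda>n. B a u n + B b u n)"
  using add_right by (simp add: commute)

lemma multilin_bdd_partial:
  assumes w: "in_Hs s w"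
  shows "multilin_bdd s t 1 (\<lambda>hs. B w (hs ! 0))"
  unfolding multilin_bdd_def
proof (intro conjI allI impI)
  fix hs :: "(int \<Rightarrow> complex) list" assume "length hs = 1 \<and> (\<forall>h\<in>set hs. in_Hs s h)"
  thus "in_Hs t (B w (hs ! 0))" using maps_into[OF w] by (auto simp: length_Suc_conv)
next
  fix i :: nat and hs a b and c :: real
  assume "i < 1" "length hs = 1 \<and> (\<forall>h\<in>set hs. in_Hs s h) \<and> in_Hs s a \<and> in_Hs s b"
  thus "B w (hs[i := (\<lambda>n. of_real c * a n + b n)] ! 0)
      = (\<lambda>n. of_real c * B w (hs[i := a] ! 0) n + B w (hs[i := b] ! 0) n)"
    using lincomb_right[OF w] by (auto simp: length_Suc_conv)
next
  show "\<exists>K. \<forall>hs. length hs = 1 \<and> (\<forall>h\<in>set hs. in_Hs s h) \<longrightarrow>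
      Hs_norm t (B w (hs ! 0)) \<le> K * (\<Prod>h\<leftarrow>hs. Hs_norm s h)"
    using bounded[OF w] by (intro exI[of _ "C * Hs_norm s w"]) (auto simp: length_Suc_conv)
qed

lemma multilin_bdd_full: "multilin_bdd s t 2 (\<lambda>hs. B (hs ! 0) (hs ! 1))"
  unfolding multilin_bdd_def
proof (intro conjI allI impI)
  fix hs :: "(int \<Rightarrow> complex) list" assume "length hs = 2 \<and> (\<forall>h\<in>set hs. in_Hs s h)"
  thus "in_Hs t (B (hs ! 0) (hs ! 1))" using maps_into by (auto simp: length_Suc_conv numeral_2_eq_2)
next
  fix i :: nat and hs a b and c :: real
  assume "i < 2" "length hs = 2 \<and> (\<forall>h\<in>set hs. in_Hs s h) \<and> in_Hs s a \<and> in_Hs s b"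
  then obtain g h where "hs = [g, h]" "in_Hs s g" "in_Hs s h" "in_Hs s a" "in_Hs s b" "i = 0 \<or> i = 1"
    by (auto simp: length_Suc_conv numeral_2_eq_2 less_Suc_eq)
  thus "B (hs[i := (\<lambda>n. of_real c * a n + b n)] ! 0) (hs[i := (\<lambda>n. of_real c * a n + b n)] ! 1)
      = (\<lambda>n. of_real c * B (hs[i := a] ! 0) (hs[i := a] ! 1) n + B (hs[i := b] ! 0) (hs[i := b] ! 1) n)"
    using lincomb_right[of g a b c] lincomb_right[of h a b c] by (auto simp: commute[of _ h])
next
  show "\<exists>K. \<forall>hs. length hs = 2 \<and> (\<forall>h\<in>set hs. in_Hs s h) \<longrightarrow>
      Hs_norm t (B (hs ! 0) (hs ! 1)) \<le> K * (\<Prod>h\<leftarrow>hs. Hs_norm s h)"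
    using bounded by (intro exI[of _ C]) (auto simp: length_Suc_conv numeral_2_eq_2 mult.assoc)
qed

lemma quadratic_remainder:
  assumes "in_Hs s w" "in_Hs s h"
  shows "(\<lambda>n. B (\<lambda>m. w m + h m) (\<lambda>m. w m + h m) n / 2 - B w w n / 2 - B w h n) = (\<lambda>n. B h h n / 2)"
  using assms add_left[of "\<lambda>m. w m + h m" w h] add_right[of w w h] add_right[of h w h] in_Hs_add[OF assms]
  by (auto simp: commute[of h w] field_simps)

lemma linear_remainder:
  assumes "in_Hs s w" "in_Hs s h" "in_Hs s g"
  shows "(\<lambda>n. B (\<lambda>m. w m + h m) g n - B w g n - B h g n) = (\<lambda>n. 0)"
  using add_left[OF assms(3,1,2)] by simp

lemma half_quadratic_le:
  assumes h: "in_Hs s h" and small: "Hs_norm s h < 2 * \<epsilon> / (C + 1)"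
  shows "Hs_norm t (\<lambda>n. B h h n / 2) \<le> \<epsilon> * Hs_norm s h"
proof -
  have "Hs_norm s h * (C + 1) < 2 * \<epsilon>" using small const_nonneg by (simp add: pos_less_divide_eq)
  moreover have "C * Hs_norm s h \<le> Hs_norm s h * (C + 1)" by (simp add: algebra_simps)
  ultimately have "C * Hs_norm s h * Hs_norm s h \<le> 2 * \<epsilon> * Hs_norm s h" by (simp add: mult_right_mono)
  moreover have "Hs_norm t (\<lambda>n. B h h n / 2) = 1/2 * Hs_norm t (B h h)"
    using Hs_norm_scale[of t "1/2" "B h h"] by simp
  ultimately show ?thesis using bounded[OF h h] by simp
qed

text \<open>The quadratic form $\frac12 B(w, w)$ is smooth, with derivatives $B(w, \cdot)$ and $B$ and
  all higher derivatives zero.\<close>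

lemma smooth_half_quadratic: "smooth_Hs s t (\<lambda>w n. B w w n / 2)"
proof -
  define D where "D k w = (\<lambda>hs. if k = 0 then (\<lambda>n. B w w n / 2) else if k = 1 then B w (hs ! 0)
    else if k = 2 then B (hs ! 0) (hs ! 1) else (\<lambda>n. 0))" for k :: nat and w
  have "multilin_bdd s t k (D k w)" if w: "in_Hs s w" for k w
  proof -
    have "in_Hs t (\<lambda>n. (1/2) * B w w n + 0)" by (intro in_Hs_lincomb maps_into w in_Hs_zero)
    hence "in_Hs t (\<lambda>n. B w w n / 2)" by simp
    moreover have "k = 0 \<or> k = 1 \<or> k = 2 \<or> k \<ge> 3" by linarith
    ultimately show ?thesis
      using multilin_bdd_const multilin_bdd_partial[OF w] multilin_bdd_full multilin_bdd_zero
      by (auto simp: D_def)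
  qed
  moreover have "\<exists>\<delta>>0. \<forall>h. in_Hs s h \<and> Hs_norm s h < \<delta> \<longrightarrow>
      (\<forall>hs. length hs = k \<and> (\<forall>g\<in>set hs. in_Hs s g \<and> Hs_norm s g \<le> 1) \<longrightarrow>
         Hs_norm t (\<lambda>n. D k (\<lambda>m. w m + h m) hs n - D k w hs n - D (Suc k) w (h # hs) n) \<le> \<epsilon> * Hs_norm s h)"
    if w: "in_Hs s w" and \<epsilon>: "\<epsilon> > 0" for k w \<epsilon>
  proof (cases "k = 0")
    case True
    show ?thesis
    proof (intro exI[of _ "2 * \<epsilon> / (C + 1)"] conjI allI impI)
      show "2 * \<epsilon> / (C + 1) > 0" using \<epsilon> const_nonneg by simp
      fix h hs assume "in_Hs s h \<and> Hs_norm s h < 2 * \<epsilon> / (C + 1)"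
      thus "Hs_norm t (\<lambda>n. D k (\<lambda>m. w m + h m) hs n - D k w hs n - D (Suc k) w (h # hs) n)
          \<le> \<epsilon> * Hs_norm s h"
        using True quadratic_remainder[OF w] half_quadratic_le by (simp add: D_def)
    qed
  next
    case False
    show ?thesis
    proof (intro exI[of _ 1] conjI allI impI)
      fix h hs assume "in_Hs s h \<and> Hs_norm s h < 1"
        and "length hs = k \<and> (\<forall>g\<in>set hs. in_Hs s g \<and> Hs_norm s g \<le> 1)"
      thus "Hs_norm t (\<lambda>n. D k (\<lambda>m. w m + h m) hs n - D k w hs n - D (Suc k) w (h # hs) n)
          \<le> \<epsilon> * Hs_norm s h"
        using False linear_remainder[OF w] \<epsilon> by (auto simp: D_def length_Suc_conv)
    qed simp
  qed
  ultimately show ?thesis unfolding smooth_Hs_def by (intro exI[of _ D]) (simp add: D_def)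
qed

end

lemma Hbilin_bounded_symmetric_bilinear:
  assumes "s > 1/2"
  shows "Hs_bounded_symmetric_bilinear s (s - 1) (Hs_algebra_const s) (Hbilin \<tau>)"
proof
  fix u v a b :: "int \<Rightarrow> complex" and c :: real
  assume "in_Hs s u" "in_Hs s v"
  thus "in_Hs (s - 1) (Hbilin \<tau> u v)"
    and "Hs_norm (s - 1) (Hbilin \<tau> u v) \<le> Hs_algebra_const s * Hs_norm s u * Hs_norm s v"
    using Hbilin_bound[OF assms] by blast+
next
  fix u a b :: "int \<Rightarrow> complex" and c :: real
  assume "in_Hs s u" "in_Hs s a" "in_Hs s b"
  thus "Hbilin \<tau> u (\<lambda>n. of_real c * a n + b n) = (\<lambda>n. of_real c * Hbilin \<tau> u a n + Hbilin \<tau> u b n)"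
    by (rule Hbilin_lincomb_right[OF assms])
qed (simp_all add: Hbilin_commute Hs_algebra_const_nonneg)

lemma smooth_Hs_cong: "(\<And>w. in_Hs s w \<Longrightarrow> F w = G w) \<Longrightarrow> smooth_Hs s t F \<longleftrightarrow> smooth_Hs s t G"
  unfolding smooth_Hs_def by simp

lemma smooth_Htilde:
  assumes "s > 1/2"
  shows "smooth_Hs s (s - 1) (Htilde \<tau>)"
  using Hs_bounded_symmetric_bilinear.smooth_half_quadratic[OF Hbilin_bounded_symmetric_bilinear[OF assms]]
  by (subst smooth_Hs_cong[OF Htilde_eq_half_Hbilin[OF assms]])

lemma Htilde_bound:
  assumes s: "s > 1/2" and w: "in_Hs s w"
  shows "in_Hs (s - 1) (Htilde \<tau> w)"
    and "Hs_norm (s - 1) (Htilde \<tau> w) \<le> Hs_algebra_const s / 2 * (Hs_norm s w)\<^sup>2"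
proof -
  have half: "Htilde \<tau> w = (\<lambda>n. (1/2) * Hbilin \<tau> w w n + 0)"
    using Htilde_eq_half_Hbilin[OF s w] by simp
  show "in_Hs (s - 1) (Htilde \<tau> w)"
    unfolding half by (intro in_Hs_lincomb Hbilin_bound(1)[OF s w w] in_Hs_zero)
  show "Hs_norm (s - 1) (Htilde \<tau> w) \<le> Hs_algebra_const s / 2 * (Hs_norm s w)\<^sup>2"
    using Hs_norm_scale[of "s - 1" "1/2" "Hbilin \<tau> w w"] Hbilin_bound(2)[OF s w w, of \<tau>]
    by (simp add: half power2_eq_square)
qed

section \<open>Periodicity and time average\<close>

lemma exp_int_times_2pi: "exp (\<i> * of_int m * of_real (2 * pi)) = 1"
  using exp_2pi_1_int[of m] by (simp add: algebra_simps)

lemma H1_periodic: "H1 (\<tau> + 2 * pi) = H1 \<tau>"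
proof (intro ext)
  fix w n
  have "exp (- \<i> * of_int (n ^ 3) * of_real (\<tau> + 2 * pi))
      = exp (- \<i> * of_int (n ^ 3) * of_real \<tau>) * exp (\<i> * of_int (- (n ^ 3)) * of_real (2 * pi))"
    by (simp add: algebra_simps flip: exp_add)
  thus "H1 (\<tau> + 2 * pi) w n = H1 \<tau> w n" unfolding H1_def by (simp only: exp_int_times_2pi) simp
qed

lemma Htilde_periodic: "Htilde (\<tau> + 2 * pi) w = Htilde \<tau> w"
  using H1_periodic[of "- \<tau> - 2 * pi"] by (simp add: Htilde_def H1_periodic)

text \<open>The cubic phases combine through $n^3 - k^3 - (n - k)^3 = 3nk(n - k)$.\<close>

lemma resonance_phase:
  "exp (- \<i> * of_int (n ^ 3) * of_real (- \<tau>)) * exp (- \<i> * of_int (k ^ 3) * of_real \<tau>)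
     * exp (- \<i> * of_int ((n - k) ^ 3) * of_real \<tau>)
   = exp (\<i> * of_int (3 * n * k * (n - k)) * of_real \<tau>)"
proof -
  have "n ^ 3 - k ^ 3 - (n - k) ^ 3 = 3 * n * k * (n - k)"
    by (simp add: power3_eq_cube algebra_simps)
  hence "(of_int (n ^ 3) :: complex) - of_int (k ^ 3) - of_int ((n - k) ^ 3) = of_int (3 * n * k * (n - k))"
    by (metis of_int_diff)
  hence "- \<i> * of_int (n ^ 3) * of_real (- \<tau>) + (- \<i> * of_int (k ^ 3) * of_real \<tau>)
      + (- \<i> * of_int ((n - k) ^ 3) * of_real \<tau>) = \<i> * of_int (3 * n * k * (n - k)) * (of_real \<tau> :: complex)"
    by (auto simp: algebra_simps simp del: of_int_mult of_int_power of_int_diff)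
  thus ?thesis by (simp only: exp_add[symmetric])
qed

lemma Htilde_eq_phase_sum:
  "Htilde \<tau> w n = (\<Sum>\<^sub>\<infinity>k. \<i> * of_int (n - k) * w k * w (n - k) * exp (\<i> * of_int (3 * n * k * (n - k)) * of_real \<tau>))"
proof -
  have "exp (- \<i> * of_int (n ^ 3) * of_real (- \<tau>)) * (exp (- \<i> * of_int (k ^ 3) * of_real \<tau>) * w k *
      (\<i> * of_int (n - k) * (exp (- \<i> * of_int ((n - k) ^ 3) * of_real \<tau>) * w (n - k))))
     = \<i> * of_int (n - k) * w k * w (n - k) * exp (\<i> * of_int (3 * n * k * (n - k)) * of_real \<tau>)" for k
    by (simp only: resonance_phase[symmetric]) (simp add: algebra_simps)
  thus ?thesis
    unfolding Htilde_def H1_def fprod_def Dx_def by (simp only: infsum_cmult_right'[symmetric])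
qed

lemma has_integral_exp_int:
  "((\<lambda>t. exp (\<i> * of_int m * of_real t)) has_integral (if m = 0 then complex_of_real (2 * pi) else 0)) {0..2 * pi}"
proof (cases "m = 0")
  case True
  thus ?thesis using has_integral_const_real[of "1::complex" 0 "2 * pi"]
    by (simp add: scaleR_conv_of_real)
next
  case False
  define a where "a = \<i> * of_int m"
  have a: "a \<noteq> 0" using False by (simp add: a_def)
  have "((\<lambda>x. exp (a * of_real x) / a) has_vector_derivative exp (a * of_real t)) (at t within {0..2 * pi})" for t
    using a by (intro derivative_eq_intros has_complex_derivative_imp_has_vector_derivative[unfolded o_def] | simp)+
  hence "((\<lambda>t. exp (a * of_real t)) has_integral (exp (a * of_real (2 * pi)) / a - exp (a * of_real 0) / a)) {0..2 * pi}"
    by (intro fundamental_theorem_of_calculus) auto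
  thus ?thesis using False exp_int_times_2pi[of m] by (simp add: a_def)
qed

lemma has_integral_infsum_termwise:
  fixes f :: "'i \<Rightarrow> real \<Rightarrow> 'a::banach"
  assumes cont: "\<And>k. continuous_on {a..b} (f k)"
    and bound: "\<And>k t. t \<in> {a..b} \<Longrightarrow> norm (f k t) \<le> M k" and M: "M summable_on UNIV"
    and integral: "\<And>k. (f k has_integral I k) {a..b}"
  shows "I summable_on UNIV" and "((\<lambda>t. \<Sum>\<^sub>\<infinity>k. f k t) has_integral (\<Sum>\<^sub>\<infinity>k. I k)) {a..b}"
proof -
  have "((\<lambda>k. f k t) has_sum (\<Sum>\<^sub>\<infinity>k. f k t)) UNIV" if "t \<in> {a..b}" for t
    using abs_summable_summable[OF summable_on_comparison_test[OF M bound[OF that]]] by simp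
  hence "uniform_limit {a..b} (\<lambda>X t. \<Sum>k\<in>X. f k t) (\<lambda>t. \<Sum>\<^sub>\<infinity>k. f k t) (finite_subsets_at_top UNIV)"
    using bound M by (intro Weierstrass_m_test_general') auto
  moreover have "continuous_on {a..b} (\<lambda>t. \<Sum>k\<in>X. f k t)" for X
    by (intro continuous_on_sum cont)
  ultimately obtain J K where J: "\<And>X. ((\<lambda>t. \<Sum>k\<in>X. f k t) has_integral J X) {a..b}"
    and K: "((\<lambda>t. \<Sum>\<^sub>\<infinity>k. f k t) has_integral K) {a..b}"
    and lim: "(J \<longlongrightarrow> K) (finite_subsets_at_top UNIV)"
    using uniform_limit_integral finite_subsets_at_top_neq_bot by blast
  have "J X = sum I X" if "finite X" for X
    using J has_integral_sum[OF that integral] by (rule has_integral_unique)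
  hence "\<forall>\<^sub>F X in finite_subsets_at_top UNIV. J X = sum I X"
    by (intro eventually_finite_subsets_at_top_weakI) simp
  hence "(I has_sum K) UNIV" unfolding has_sum_def by (rule Lim_transform_eventually[OF lim])
  thus "I summable_on UNIV" and "((\<lambda>t. \<Sum>\<^sub>\<infinity>k. f k t) has_integral (\<Sum>\<^sub>\<infinity>k. I k)) {a..b}"
    using K by (auto simp: has_sum_iff)
qed

text \<open>Averaging over a period keeps exactly the resonant terms $nk(n - k) = 0$: for $n \neq 0$
  these are $k = 0$ and $k = n$ (which vanishes), for $n = 0$ all $k$.\<close>

lemma infsum_resonant_terms:
  "(\<Sum>\<^sub>\<infinity>k. \<i> * of_int (n - k) * w k * w (n - k)
       * (if 3 * n * k * (n - k) = 0 then complex_of_real (2 * pi) else 0))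
   = complex_of_real (2 * pi) * Kavg w n"
proof (cases "n = 0")
  case True
  have "(\<Sum>\<^sub>\<infinity>k. \<i> * of_int (n - k) * w k * w (n - k)
         * (if 3 * n * k * (n - k) = 0 then complex_of_real (2 * pi) else 0))
      = (\<Sum>\<^sub>\<infinity>k. complex_of_real (2 * pi) * (\<i> * of_int (- k) * w (- (- k)) * w (- k)))"
    by (rule infsum_cong) (simp add: True)
  also have "\<dots> = complex_of_real (2 * pi) * (\<Sum>\<^sub>\<infinity>m. \<i> * of_int m * w (- m) * w m)"
    unfolding infsum_cmult_right'
    by (rule arg_cong[OF infsum_reindex_bij_betw]) (auto intro!: bij_betwI[where g=uminus])
  finally show ?thesis by (simp add: Kavg_def True ac_simps)
next
  case False
  have "((\<lambda>k. \<i> * of_int (n - k) * w k * w (n - k) * (if 3 * n * k * (n - k) = 0 then complex_of_real (2 * pi) else 0))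
      has_sum (complex_of_real (2 * pi) * Kavg w n)) UNIV"
  proof (rule has_sum_finite_neutralI[of "{0}"])
    fix k :: int assume "k \<in> UNIV - {0}"
    thus "\<i> * of_int (n - k) * w k * w (n - k) * (if 3 * n * k * (n - k) = 0 then complex_of_real (2 * pi) else 0) = 0"
      using False by (cases "k = n") simp_all
  qed (use False in \<open>simp_all add: Kavg_def\<close>)
  thus ?thesis by (rule infsumI)
qed

lemma time_average_Htilde:
  assumes s: "s > 1/2" and w: "in_Hs s w"
  shows "(\<lambda>\<tau>. Htilde \<tau> w n) integrable_on {0..2 * pi}"
    and "integral {0..2 * pi} (\<lambda>\<tau>. Htilde \<tau> w n) / complex_of_real (2 * pi) = Kavg w n"
proof -
  have w': "in_Hs (1/2) w" using in_Hs_mono[of "1/2" s w] s w by simp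
  define f where "f k \<tau> = \<i> * of_int (n - k) * w k * w (n - k) * exp (\<i> * of_int (3 * n * k * (n - k)) * of_real \<tau>)"
    for k and \<tau> :: real
  have "((\<lambda>\<tau>. \<Sum>\<^sub>\<infinity>k. f k \<tau>) has_integral (\<Sum>\<^sub>\<infinity>k. \<i> * of_int (n - k) * w k * w (n - k)
      * (if 3 * n * k * (n - k) = 0 then complex_of_real (2 * pi) else 0))) {0..2 * pi}"
  proof (rule has_integral_infsum_termwise(2))
    show "continuous_on {0..2 * pi} (f k)" for k
      unfolding f_def by (intro continuous_intros)
    show "norm (f k \<tau>) \<le> norm (w k * Dx w (n - k))" for k \<tau>
      unfolding f_def Dx_def by (simp add: norm_mult norm_exp_eq_Re del: of_int_diff)
    show "(\<lambda>k. norm (w k * Dx w (n - k))) summable_on UNIV"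
      by (rule summable_on_conv_Dx[OF w' w'])
    show "(f k has_integral \<i> * of_int (n - k) * w k * w (n - k)
        * (if 3 * n * k * (n - k) = 0 then complex_of_real (2 * pi) else 0)) {0..2 * pi}" for k
      unfolding f_def by (rule has_integral_mult_right[OF has_integral_exp_int])
  qed
  hence "((\<lambda>\<tau>. Htilde \<tau> w n) has_integral complex_of_real (2 * pi) * Kavg w n) {0..2 * pi}"
    unfolding infsum_resonant_terms f_def Htilde_eq_phase_sum[symmetric] .
  thus "(\<lambda>\<tau>. Htilde \<tau> w n) integrable_on {0..2 * pi}"
    and "integral {0..2 * pi} (\<lambda>\<tau>. Htilde \<tau> w n) / complex_of_real (2 * pi) = Kavg w n"
    by (auto simp: integral_unique)
qed

theorem lemma2p7:
  fixes s :: real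
  assumes "s > 1/2"
  shows "(\<forall>\<tau> w n. in_Hs s w \<longrightarrow>
            (\<lambda>k. norm (H1 \<tau> w k * Dx (H1 \<tau> w) (n - k))) summable_on UNIV)
       \<and> (\<forall>\<tau> w. in_Hs s w \<longrightarrow> in_Hs (s - 1) (Htilde \<tau> w))
       \<and> (\<forall>\<tau>. smooth_Hs s (s - 1) (Htilde \<tau>))
       \<and> (\<exists>C. \<forall>\<tau> w. in_Hs s w \<longrightarrow> Hs_norm (s - 1) (Htilde \<tau> w) \<le> C * (Hs_norm s w)\<^sup>2)
       \<and> (\<forall>\<tau> w. Htilde (\<tau> + 2 * pi) w = Htilde \<tau> w)
       \<and> (\<forall>w. in_Hs s w \<longrightarrow>
            (\<lambda>m. norm (\<i> * of_int m * w m * w (- m))) summable_on UNIV \<and>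
            (\<forall>n. (\<lambda>\<tau>. Htilde \<tau> w n) integrable_on {0..2 * pi} \<and>
                 integral {0..2 * pi} (\<lambda>\<tau>. Htilde \<tau> w n) / complex_of_real (2 * pi) = Kavg w n))"
proof -
  have conv_Dx: "(\<lambda>k. norm (w k * Dx w (n - k))) summable_on UNIV" if "in_Hs s w" for w n
    using in_Hs_mono[of "1/2" s w] that assms by (intro summable_on_conv_Dx) simp_all
  show ?thesis
  proof (intro conjI allI impI exI[of _ "Hs_algebra_const s / 2"])
    fix \<tau> w n assume "in_Hs s w"
    thus "(\<lambda>k. norm (H1 \<tau> w k * Dx (H1 \<tau> w) (n - k))) summable_on UNIV" by (simp add: conv_Dx)
  next
    fix w :: "int \<Rightarrow> complex" assume w: "in_Hs s w"
    have "norm (w m * Dx w (0 - m)) = norm (\<i> * of_int m * w m * w (- m))" for m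
      by (simp add: Dx_def norm_mult)
    thus "(\<lambda>m. norm (\<i> * of_int m * w m * w (- m))) summable_on UNIV"
      using conv_Dx[OF w, of 0] by simp
  qed (use Htilde_bound[OF assms] smooth_Htilde[OF assms] Htilde_periodic time_average_Htilde[OF assms]
       in blast)+
qed

end
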